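(* Let $p$ be an odd prime, let $\Delta\in\mathbb{Z}$ with $\Delta\equiv 3\pmod 4$ be a quadratic non-residue modulo $p$, and let $\mathfrak{p}=p\mathbb{Z}[\sqrt{\Delta}]$ (so $\mathbb{Z}[\sqrt{\Delta}]/\mathfrak{p}$ is a field with $p^2$ elements, in which each $k+\sqrt{\Delta}$, $k\in\mathbb{Z}$, is invertible). Let $$C_p=\prod_{1\le s<t\le p-1}\frac{1}{(t+\sqrt{\Delta})(s+\sqrt{\Delta})}\in \mathbb{Z}[\sqrt{\Delta}]/\mathfrak{p}.$$ Then $$C_p^{\frac{p-1}{2}}\equiv\left(\frac{-2}{p}\right)\pmod{\mathfrak{p}},$$ where $\left(\frac{\cdot}{p}\right)$ is the Legendre symbol. *)

theory Defs
  imports Complex_Main "HOL-Number_Theory.Number_Theory"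
begin

definition zsqrt :: "int \<Rightarrow> complex set" where
  "zsqrt D = {of_int a + of_int b * csqrt (of_int D) | a b. True}"

definition cong_ideal :: "int \<Rightarrow> int \<Rightarrow> complex \<Rightarrow> complex \<Rightarrow> bool" where
  "cong_ideal D p x y \<longleftrightarrow>
     (\<exists>a b. x - y = of_int p * (of_int a + of_int b * csqrt (of_int D)))"

definition inv_mod :: "int \<Rightarrow> int \<Rightarrow> complex \<Rightarrow> complex" where
  "inv_mod D p x = (SOME y. y \<in> zsqrt D \<and> cong_ideal D p (x * y) 1)"

end

theory Submission
  imports Defs "HOL-Combinatorics.Stirling"
begin

text \<open>Write w for sqrt D. Modulo p, the polynomial x (x+1) ... (x+p-1) is x^p - x (its
  coefficients are Stirling numbers of the first kind), and w^p = w D^((p-1)/2) = -w because D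
  is a non-residue. Evaluating at x = w gives w P = -2w for the product P of all k + w with
  0 < k < p, hence P = -2. Every k + w occurs in exactly p - 2 of the pairs (s, t), so
  C_p = P^-(p-2), and C_p^((p-1)/2) = ((-2)^((p-1)/2))^-(p-2) = (-2/p) by Euler's criterion.\<close>

lemma sum_powers_forward_difference:
  fixes c :: "nat \<Rightarrow> 'a::comm_ring_1"
  shows "(\<Sum>k\<le>Suc n. c k * (x + 1) ^ k) - (\<Sum>k\<le>Suc n. c k * x ^ k)
       = (\<Sum>j\<le>n. (\<Sum>k\<le>Suc n. c k * (if j < k then of_nat (k choose j) else 0)) * x ^ j)"
proof -
  have power_difference:
    "(x + 1) ^ k - x ^ k = (\<Sum>j\<le>n. (if j < k then of_nat (k choose j) else 0) * x ^ j)"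
    if "k \<le> Suc n" for k
  proof -
    have "(x + 1) ^ k - x ^ k = (\<Sum>j<k. of_nat (k choose j) * x ^ j)"
      using binomial_ring[of x 1 k] by (simp add: lessThan_Suc_atMost[symmetric])
    also have "\<dots> = (\<Sum>j\<le>n. (if j < k then of_nat (k choose j) else 0) * x ^ j)"
      using that by (intro sum.mono_neutral_cong_left) auto
    finally show ?thesis .
  qed
  have "(\<Sum>k\<le>Suc n. c k * (x + 1) ^ k) - (\<Sum>k\<le>Suc n. c k * x ^ k)
      = (\<Sum>k\<le>Suc n. c k * ((x + 1) ^ k - x ^ k))"
    by (simp add: sum_subtractf right_diff_distrib)
  also have "\<dots>
      = (\<Sum>k\<le>Suc n. \<Sum>j\<le>n. c k * (if j < k then of_nat (k choose j) else 0) * x ^ j)"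
    by (intro sum.cong) (simp_all add: power_difference sum_distrib_left mult.assoc)
  also have "\<dots>
      = (\<Sum>j\<le>n. (\<Sum>k\<le>Suc n. c k * (if j < k then of_nat (k choose j) else 0)) * x ^ j)"
    by (subst sum.swap) (simp only: sum_distrib_right)
  finally show ?thesis .
qed

text \<open>Induction on n: the forward difference of the polynomial has degree n - 1, vanishes mod p
  as well, and has leading coefficient n c n.\<close>
lemma prime_dvd_coeff_if_dvd_poly_values:
  fixes p :: int and c :: "nat \<Rightarrow> int"
  assumes "prime p" and "int n < p" and "\<And>x. p dvd (\<Sum>k\<le>n. c k * x ^ k)" and "k \<le> n"
  shows "p dvd c k"
  using assms(2-4)
proof (induction n arbitrary: c k)
  case 0
  then show ?case using "0.prems"(2)[of 0] by simp
next
  case (Suc n)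
  define d where "d j = (\<Sum>i\<le>Suc n. c i * (if j < i then of_nat (i choose j) else 0))" for j
  have "p dvd (\<Sum>j\<le>n. d j * x ^ j)" for x
    using Suc.prems(2)[of "x + 1"] Suc.prems(2)[of x]
      sum_powers_forward_difference[where c = c and n = n and x = x]
    unfolding d_def by (metis dvd_diff)
  then have "p dvd d n" using Suc.IH Suc.prems(1) by simp
  moreover have "d n = c (Suc n) * of_nat (Suc n)"
  proof -
    have "d n = (\<Sum>i\<in>{Suc n}. c i * (if n < i then of_nat (i choose n) else 0))"
      unfolding d_def by (rule sum.mono_neutral_right) auto
    then show ?thesis by simp
  qed
  moreover have "\<not> p dvd of_nat (Suc n)"
    using Suc.prems(1) zdvd_imp_le[of p "int (Suc n)"] by auto
  ultimately have top: "p dvd c (Suc n)"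
    using \<open>prime p\<close> prime_dvd_mult_iff by metis
  have "p dvd (\<Sum>i\<le>n. c i * x ^ i)" for x
    using Suc.prems(2)[of x] top by (simp add: dvd_add_left_iff)
  then have "p dvd c k" if "k \<le> n" using Suc.IH Suc.prems(1) that by simp
  with top show ?case using Suc.prems(3) le_Suc_eq by blast
qed

lemma fermat_theorem_int:
  fixes p :: nat and x :: int
  assumes "prime p"
  shows "[x ^ p = x] (mod p)"
proof -
  obtain n where n: "x mod int p = int n"
    using assms by (metis prime_gt_0_nat of_nat_0_less_iff pos_mod_sign zero_le_imp_eq_int)
  have "[n ^ p = n] (mod p)"
  proof (cases "p dvd n")
    case True
    then have n0: "[n = 0] (mod p)" by (simp add: cong_0_iff)
    then have "[n ^ p = 0 ^ p] (mod p)" by (rule cong_pow)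
    moreover have "(0::nat) ^ p = 0" using assms prime_gt_0_nat by simp
    ultimately show ?thesis using n0 by (metis cong_sym cong_trans)
  next
    case False
    then have "[n * n ^ (p - 1) = n * 1] (mod p)"
      using fermat_theorem[OF assms] cong_scalar_left by blast
    moreover have "n * n ^ (p - 1) = n ^ p"
      using assms by (simp add: prime_gt_0_nat flip: power_Suc)
    ultimately show ?thesis by simp
  qed
  then have "[int n ^ p = int n] (mod p)" by (metis cong_int_iff of_nat_power)
  moreover have "[x = int n] (mod p)" using n by (metis cong_def mod_mod_trivial)
  ultimately show ?thesis by (meson cong_pow cong_sym cong_trans)
qed

lemma sum_coeffs_power_minus_self:
  fixes x :: "'a::comm_ring_1"
  assumes "2 \<le> p"
  shows "(\<Sum>k\<le>p. of_int (if k = p then 1 else if k = 1 then -1 else 0) * x ^ k) = x ^ p - x"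
proof -
  have "(\<Sum>k\<le>p. of_int (if k = p then 1 else if k = 1 then -1 else 0) * x ^ k)
      = (\<Sum>k\<le>p. (if k = p then x ^ k else 0) - (if k = 1 then x ^ k else 0))"
    using assms by (intro sum.cong) auto
  also have "\<dots> = x ^ p - x"
    using assms by (simp add: sum_subtractf)
  finally show ?thesis .
qed

text \<open>Both x (x+1) ... (x+p-1) and x^p - x vanish mod p at every integer x, so their difference,
  of degree less than p, has all its coefficients divisible by p.\<close>
lemma stirling_prime_cong:
  fixes p :: nat
  assumes "prime p"
  shows "[int (stirling p k) = (if k = p then 1 else if k = 1 then -1 else 0)] (mod p)"
proof -
  define e :: "nat \<Rightarrow> int" where "e k = (if k = p then 1 else if k = 1 then -1 else 0)" for k
  define c where "c k = int (stirling p k) - e k" for k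
  have p2: "2 \<le> p" using prime_ge_2_nat assms by blast
  have "p dvd (\<Sum>k\<le>p - 1. c k * x ^ k)" for x :: int
  proof -
    have "(\<Sum>k\<le>p - 1. c k * x ^ k) = (\<Sum>k\<le>p. c k * x ^ k)"
      using p2 by (cases p) (simp_all add: c_def e_def)
    also have "\<dots> = pochhammer x p - (x ^ p - x)"
      using sum_coeffs_power_minus_self[OF p2, of x]
      by (simp add: c_def e_def left_diff_distrib sum_subtractf flip: stirling_pochhammer)
    finally have "(\<Sum>k\<le>p - 1. c k * x ^ k) = pochhammer x p - (x ^ p - x)" .
    moreover have "int p dvd pochhammer x p"
    proof -
      have "p dvd fact p" using p2 by (simp add: dvd_fact)
      then have "int p dvd fact p" by (metis of_nat_dvd_iff of_nat_fact)
      then show ?thesis using fact_dvd_pochhammer dvd_trans by blast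
    qed
    moreover have "int p dvd x ^ p - x"
      using fermat_theorem_int[OF assms] by (simp add: cong_iff_dvd_diff)
    ultimately show ?thesis by simp
  qed
  then have "int p dvd c k" if "k \<le> p - 1" for k
    using prime_dvd_coeff_if_dvd_poly_values[of p "p - 1" c k] assms p2 that by simp
  moreover have "c k = 0" if "p - 1 < k" for k
    using that p2 by (auto simp: c_def e_def)
  ultimately have "int p dvd c k" by (cases "k \<le> p - 1") auto
  then show ?thesis by (simp add: c_def e_def cong_iff_dvd_diff)
qed

lemma zsqrt_iff: "x \<in> zsqrt D \<longleftrightarrow> (\<exists>a b. x = of_int a + of_int b * csqrt (of_int D))"
  by (simp add: zsqrt_def)

lemma of_int_in_zsqrt [simp]: "of_int a \<in> zsqrt D"
  unfolding zsqrt_iff by (rule exI[of _ a], rule exI[of _ 0]) simp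

lemma zero_in_zsqrt [simp]: "0 \<in> zsqrt D"
  using of_int_in_zsqrt[of 0 D] by simp

lemma one_in_zsqrt [simp]: "1 \<in> zsqrt D"
  using of_int_in_zsqrt[of 1 D] by simp

lemma numeral_in_zsqrt [simp]: "numeral n \<in> zsqrt D"
  using of_int_in_zsqrt[of "numeral n" D] by simp

lemma csqrt_in_zsqrt [simp]: "csqrt (of_int D) \<in> zsqrt D"
  unfolding zsqrt_iff by (rule exI[of _ 0], rule exI[of _ 1]) simp

lemma add_in_zsqrt [simp]: "x \<in> zsqrt D \<Longrightarrow> y \<in> zsqrt D \<Longrightarrow> x + y \<in> zsqrt D"
  unfolding zsqrt_iff
  by (auto, rule_tac x = "a + aa" in exI, rule_tac x = "b + ba" in exI, simp add: algebra_simps)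

lemma uminus_in_zsqrt [simp]: "x \<in> zsqrt D \<Longrightarrow> - x \<in> zsqrt D"
  unfolding zsqrt_iff by (auto, rule_tac x = "- a" in exI, rule_tac x = "- b" in exI, simp)

lemma diff_in_zsqrt [simp]: "x \<in> zsqrt D \<Longrightarrow> y \<in> zsqrt D \<Longrightarrow> x - y \<in> zsqrt D"
  using add_in_zsqrt[of x D "- y"] by simp

lemma mult_in_zsqrt [simp]:
  assumes "x \<in> zsqrt D" and "y \<in> zsqrt D"
  shows "x * y \<in> zsqrt D"
proof -
  obtain a b c d where x: "x = of_int a + of_int b * csqrt (of_int D)"
    and y: "y = of_int c + of_int d * csqrt (of_int D)"
    using assms unfolding zsqrt_iff by blast
  have "x * y = of_int (a * c + b * d * D) + of_int (a * d + b * c) * csqrt (of_int D)"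
    unfolding x y by (simp add: algebra_simps flip: power2_eq_square)
  then show ?thesis unfolding zsqrt_iff by blast
qed

lemma power_in_zsqrt [simp]: "x \<in> zsqrt D \<Longrightarrow> x ^ n \<in> zsqrt D"
  by (induction n) auto

lemma prod_in_zsqrt: "(\<And>i. i \<in> A \<Longrightarrow> f i \<in> zsqrt D) \<Longrightarrow> prod f A \<in> zsqrt D"
  by (induction A rule: infinite_finite_induct) auto

lemma cong_ideal_iff: "cong_ideal D p x y \<longleftrightarrow> (\<exists>z\<in>zsqrt D. x - y = of_int p * z)"
  unfolding cong_ideal_def by (auto simp: zsqrt_def)

lemma cong_ideal_refl [simp]: "cong_ideal D p x x"
  unfolding cong_ideal_iff by (rule bexI[of _ 0]) auto

lemma cong_ideal_sym: "cong_ideal D p x y \<Longrightarrow> cong_ideal D p y x"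
  unfolding cong_ideal_iff by (auto intro!: bexI[of _ "- z" for z] simp: algebra_simps)

lemma cong_ideal_trans [trans]:
  "cong_ideal D p x y \<Longrightarrow> cong_ideal D p y z \<Longrightarrow> cong_ideal D p x z"
  unfolding cong_ideal_iff
proof (elim bexE)
  fix u v assume "u \<in> zsqrt D" "x - y = of_int p * u" "v \<in> zsqrt D" "y - z = of_int p * v"
  then show "\<exists>w\<in>zsqrt D. x - z = of_int p * w"
    by (intro bexI[of _ "u + v"]) (auto simp: algebra_simps)
qed

lemma cong_ideal_add:
  "cong_ideal D p x y \<Longrightarrow> cong_ideal D p x' y' \<Longrightarrow> cong_ideal D p (x + x') (y + y')"
  unfolding cong_ideal_iff
proof (elim bexE)
  fix u v assume "u \<in> zsqrt D" "x - y = of_int p * u" "v \<in> zsqrt D" "x' - y' = of_int p * v"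
  then show "\<exists>w\<in>zsqrt D. x + x' - (y + y') = of_int p * w"
    by (intro bexI[of _ "u + v"]) (auto simp: algebra_simps)
qed

lemma cong_ideal_mult:
  assumes "cong_ideal D p x y" "cong_ideal D p x' y'" "x \<in> zsqrt D" "y' \<in> zsqrt D"
  shows "cong_ideal D p (x * x') (y * y')"
proof -
  obtain u v where "u \<in> zsqrt D" "x - y = of_int p * u" "v \<in> zsqrt D" "x' - y' = of_int p * v"
    using assms(1,2) unfolding cong_ideal_iff by blast
  moreover have "x * x' - y * y' = x * (x' - y') + (x - y) * y'"
    by (simp add: algebra_simps)
  ultimately have "x * x' - y * y' = of_int p * (x * v + u * y')"
    by (simp add: algebra_simps)
  with assms(3,4) \<open>u \<in> zsqrt D\<close> \<open>v \<in> zsqrt D\<close> show ?thesis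
    unfolding cong_ideal_iff by auto
qed

lemma cong_ideal_power:
  "cong_ideal D p x y \<Longrightarrow> x \<in> zsqrt D \<Longrightarrow> y \<in> zsqrt D \<Longrightarrow> cong_ideal D p (x ^ n) (y ^ n)"
  by (induction n) (auto intro: cong_ideal_mult)

lemma cong_ideal_sum:
  "(\<And>i. i \<in> A \<Longrightarrow> cong_ideal D p (f i) (g i)) \<Longrightarrow> cong_ideal D p (sum f A) (sum g A)"
  by (induction A rule: infinite_finite_induct) (auto intro: cong_ideal_add)

lemma cong_ideal_prod:
  assumes "\<And>i. i \<in> A \<Longrightarrow> cong_ideal D p (f i) (g i)"
    and "\<And>i. i \<in> A \<Longrightarrow> f i \<in> zsqrt D" and "\<And>i. i \<in> A \<Longrightarrow> g i \<in> zsqrt D"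
  shows "cong_ideal D p (prod f A) (prod g A)"
  using assms
proof (induction A rule: infinite_finite_induct)
  case (insert a A)
  then show ?case by (simp, intro cong_ideal_mult prod_in_zsqrt) auto
qed auto

lemma cong_ideal_of_int_mult:
  assumes "[a = b] (mod p)" and "z \<in> zsqrt D"
  shows "cong_ideal D p (of_int a * z) (of_int b * z)"
proof -
  obtain k where "a - b = p * k"
    using assms(1) by (metis cong_iff_dvd_diff dvdE)
  then have "of_int a * z - of_int b * z = of_int p * (of_int k * z)"
    by (metis left_diff_distrib mult.assoc of_int_diff of_int_mult)
  with assms(2) show ?thesis unfolding cong_ideal_iff by auto
qed

lemma cong_ideal_cancel_of_int:
  assumes "coprime a p" and "cong_ideal D p (of_int a * x) (of_int a * y)"
    and "x \<in> zsqrt D" and "y \<in> zsqrt D"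
  shows "cong_ideal D p x y"
proof -
  obtain u where u: "[u * a = 1] (mod p)"
    using assms(1) cong_solve_coprime_int by (metis mult.commute)
  have "cong_ideal D p (of_int 1 * x) (of_int (u * a) * x)"
    using cong_ideal_of_int_mult[OF cong_sym[OF u] assms(3)] .
  moreover have "cong_ideal D p (of_int u * (of_int a * x)) (of_int u * (of_int a * y))"
    using assms(2-4) by (intro cong_ideal_mult[OF cong_ideal_refl assms(2)]) auto
  moreover have "cong_ideal D p (of_int (u * a) * y) (of_int 1 * y)"
    using cong_ideal_of_int_mult[OF u assms(4)] .
  ultimately show ?thesis
    by (simp add: mult.assoc) (meson cong_ideal_trans)
qed

lemma pochhammer_prime_cong:
  fixes p :: nat
  assumes "prime p" and "x \<in> zsqrt D"
  shows "cong_ideal D p (pochhammer x p) (x ^ p - x)"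
proof -
  have "pochhammer x p = (\<Sum>k\<le>p. of_int (int (stirling p k)) * x ^ k)"
    using stirling_pochhammer[of p x] by simp
  also have "cong_ideal D p \<dots>
      (\<Sum>k\<le>p. of_int (if k = p then 1 else if k = 1 then -1 else 0) * x ^ k)"
    using stirling_prime_cong[OF assms(1)] assms(2)
    by (intro cong_ideal_sum cong_ideal_of_int_mult) auto
  also have "\<dots> = x ^ p - x"
    using assms(1) prime_ge_2_nat by (intro sum_coeffs_power_minus_self) blast
  finally show ?thesis .
qed

lemma not_QuadRes_imp_not_dvd: "\<not> QuadRes p D \<Longrightarrow> \<not> p dvd D"
  unfolding QuadRes_def by (metis cong_iff_dvd_diff diff_0 dvd_minus_iff power_zero_numeral)

lemma csqrt_power_prime_cong:
  fixes p :: nat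
  assumes "prime p" and "p > 2" and "\<not> QuadRes p D"
  shows "cong_ideal D p (csqrt (of_int D) ^ p) (- csqrt (of_int D))"
proof -
  define h where "h = (p - 1) div 2"
  have "p = Suc (2 * h)"
    using prime_odd_nat[OF assms(1,2)] unfolding h_def by (auto elim!: oddE)
  then have power_eq: "csqrt (of_int D) ^ p = of_int (D ^ h) * csqrt (of_int D)"
    by (simp add: power_mult)
  have "Legendre D p = -1"
    using assms(3) not_QuadRes_imp_not_dvd[OF assms(3)] by (simp add: Legendre_def cong_0_iff)
  then have "[D ^ h = -1] (mod p)"
    using euler_criterion[OF assms(1,2), of D] unfolding h_def by (simp add: cong_sym_eq)
  then have "cong_ideal D p (of_int (D ^ h) * csqrt (of_int D)) (of_int (-1) * csqrt (of_int D))"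
    by (rule cong_ideal_of_int_mult) simp
  then show ?thesis using power_eq by simp
qed

lemma prod_int_plus_csqrt_cong:
  fixes p :: nat
  assumes "prime p" and "p > 2" and "\<not> QuadRes p D"
  shows "cong_ideal D p (\<Prod>k\<in>{1..int p - 1}. of_int k + csqrt (of_int D)) (-2)"
proof -
  let ?w = "csqrt (of_int D)"
  define P where "P = (\<Prod>k\<in>{1..int p - 1}. of_int k + ?w)"
  have "?w * P = pochhammer ?w p"
  proof -
    have "{0..<p} = insert 0 {1..<p}" and "{1..int p - 1} = int ` {1..<p}"
      using assms(2) by (auto simp: image_int_atLeastLessThan)
    then show ?thesis
      unfolding P_def pochhammer_prod by (simp add: prod.reindex add.commute)
  qed
  also have "cong_ideal D p \<dots> (?w ^ p - ?w)"
    using assms(1) by (rule pochhammer_prime_cong) simp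
  also have "cong_ideal D p \<dots> (- ?w - ?w)"
    using cong_ideal_add[OF csqrt_power_prime_cong[OF assms] cong_ideal_refl[of D p "- ?w"]]
    by simp
  also have "- ?w - ?w = ?w * (-2)" by simp
  finally have "cong_ideal D p (?w * P) (?w * (-2))" .
  then have "cong_ideal D p (?w * (?w * P)) (?w * (?w * (-2)))"
    by (rule cong_ideal_mult[OF cong_ideal_refl]) simp_all
  moreover have "?w * (?w * z) = of_int D * z" for z
    by (metis mult.assoc power2_csqrt power2_eq_square)
  ultimately have D_times: "cong_ideal D p (of_int D * P) (of_int D * (-2))"
    by simp
  have "coprime D p"
    using prime_imp_coprime[of "int p" D] assms(1) not_QuadRes_imp_not_dvd[OF assms(3)]
    by (simp add: coprime_commute)
  from cong_ideal_cancel_of_int[OF this D_times] show ?thesis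
    unfolding P_def by (simp add: prod_in_zsqrt)
qed

lemma inv_mod_correct:
  assumes "y \<in> zsqrt D" and "cong_ideal D p (x * y) 1"
  shows "inv_mod D p x \<in> zsqrt D" and "cong_ideal D p (x * inv_mod D p x) 1"
  using someI[of "\<lambda>y. y \<in> zsqrt D \<and> cong_ideal D p (x * y) 1", OF conjI[OF assms]]
  unfolding inv_mod_def by auto

text \<open>The inverse of k + sqrt D is its conjugate divided by the norm k^2 - D, which is a unit
  mod p because D is not a square.\<close>
lemma int_plus_csqrt_inverse:
  assumes "prime p" and "\<not> QuadRes p D"
  obtains y where "y \<in> zsqrt D" and "cong_ideal D p ((of_int k + csqrt (of_int D)) * y) 1"
proof -
  have "\<not> p dvd k ^ 2 - D"
    using assms(2) unfolding QuadRes_def by (simp add: cong_iff_dvd_diff)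
  then have "coprime (k ^ 2 - D) p"
    using prime_imp_coprime[OF assms(1)] coprime_commute by blast
  then obtain u where u: "[(k ^ 2 - D) * u = 1] (mod p)"
    using cong_solve_coprime_int by blast
  have "(of_int k + csqrt (of_int D)) * (of_int u * (of_int k - csqrt (of_int D)))
      = of_int ((k ^ 2 - D) * u) * 1"
    by (simp add: algebra_simps flip: power2_eq_square)
  also have "cong_ideal D p \<dots> (of_int 1 * 1)"
    using u by (rule cong_ideal_of_int_mult) simp
  finally show ?thesis
    using that[of "of_int u * (of_int k - csqrt (of_int D))"] by simp
qed

lemma inv_mod_int_plus_csqrt:
  assumes "prime p" and "\<not> QuadRes p D"
  shows "inv_mod D p (of_int k + csqrt (of_int D)) \<in> zsqrt D"
    and "cong_ideal D p ((of_int k + csqrt (of_int D)) * inv_mod D p (of_int k + csqrt (of_int D))) 1"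
  by (metis assms int_plus_csqrt_inverse inv_mod_correct)+

lemma prod_inv_mod_int_plus_csqrt_cong:
  fixes p :: nat
  assumes "prime p" and "p > 2" and "\<not> QuadRes p D"
  shows "cong_ideal D p
    (of_int (-2) * (\<Prod>k\<in>{1..int p - 1}. inv_mod D p (of_int k + csqrt (of_int D)))) 1"
proof -
  let ?z = "\<lambda>k. of_int k + csqrt (of_int D)"
  let ?Y = "\<Prod>k\<in>{1..int p - 1}. inv_mod D p (?z k)"
  have inverse: "inv_mod D p (?z k) \<in> zsqrt D" "cong_ideal D p (?z k * inv_mod D p (?z k)) 1" for k
    using inv_mod_int_plus_csqrt[of p D k] assms(1,3) by simp_all
  have "of_int (-2) * ?Y = -2 * ?Y"
    by simp
  also have "cong_ideal D p \<dots> ((\<Prod>k\<in>{1..int p - 1}. ?z k) * ?Y)"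
    using inverse(1) by (intro cong_ideal_mult[OF cong_ideal_sym[OF prod_int_plus_csqrt_cong[OF assms]]])
      (simp_all add: prod_in_zsqrt)
  also have "\<dots> = (\<Prod>k\<in>{1..int p - 1}. ?z k * inv_mod D p (?z k))"
    by (simp add: prod.distrib)
  also have "cong_ideal D p \<dots> (\<Prod>k\<in>{1..int p - 1}. 1)"
    using inverse by (intro cong_ideal_prod) simp_all
  finally show ?thesis by simp
qed

lemma prod_pairs_less:
  fixes f :: "'a::linorder \<Rightarrow> 'b::comm_semiring_1"
  assumes "finite A"
  shows "(\<Prod>(s, t)\<in>{(s, t). s \<in> A \<and> t \<in> A \<and> s < t}. f t * f s)
    = prod f A ^ (card A - 1)"
proof -
  let ?less = "{(s, t). s \<in> A \<and> t \<in> A \<and> s < t}"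
  let ?greater = "{(s, t). s \<in> A \<and> t \<in> A \<and> t < s}"
  have finite: "finite ?less" "finite ?greater"
    by (rule finite_subset[of _ "A \<times> A"], use assms in auto)+
  have "(\<Prod>(s, t)\<in>?less. f t * f s) = (\<Prod>(s, t)\<in>?less. f t) * (\<Prod>(s, t)\<in>?less. f s)"
    by (simp add: prod.distrib split_def)
  also have "(\<Prod>(s, t)\<in>?less. f t) = (\<Prod>(s, t)\<in>?greater. f s)"
    by (rule prod.reindex_bij_witness[of _ prod.swap prod.swap]) auto
  also have "(\<Prod>(s, t)\<in>?greater. f s) * (\<Prod>(s, t)\<in>?less. f s)
      = (\<Prod>(s, t)\<in>?greater \<union> ?less. f s)"
    by (rule prod.union_disjoint[symmetric]) (use finite in auto)
  also have "?greater \<union> ?less = Sigma A (\<lambda>s. A - {s})"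
    by auto
  also have "(\<Prod>(s, t)\<in>Sigma A (\<lambda>s. A - {s}). f s) = (\<Prod>s\<in>A. f s ^ (card A - 1))"
    using assms by (simp add: prod.Sigma[symmetric] card_Diff_singleton)
  also have "\<dots> = prod f A ^ (card A - 1)"
    by (rule prod_power_distrib[symmetric])
  finally show ?thesis .
qed

lemma Legendre_power_cong:
  fixes p :: nat and a :: int
  assumes "prime p" and "p > 2" and "\<not> [a = 0] (mod p)"
  shows "[a ^ ((p - 2) * ((p - 1) div 2)) * Legendre a p = 1] (mod p)"
proof -
  have L: "Legendre a p = 1 \<or> Legendre a p = -1"
    using assms(3) by (auto simp: Legendre_def)
  have "odd (p - 2)"
    using prime_odd_nat[OF assms(1,2)] assms(2) by simp
  then have "Legendre a p ^ (p - 2) = Legendre a p"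
    using L by auto
  moreover have "[a ^ ((p - 2) * ((p - 1) div 2)) = Legendre a p ^ (p - 2)] (mod p)"
    using cong_pow[where n = "p - 2", OF cong_sym[OF euler_criterion[OF assms(1,2), of a]]]
    by (metis mult.commute power_mult)
  ultimately have "[a ^ ((p - 2) * ((p - 1) div 2)) * Legendre a p = Legendre a p * Legendre a p] (mod p)"
    by (simp add: cong_scalar_right)
  then show ?thesis using L by auto
qed

lemma cong_ideal_power_inverse:
  assumes "cong_ideal D p (of_int a * y) 1" and "y \<in> zsqrt D" and "[a ^ m * b = 1] (mod p)"
  shows "cong_ideal D p (y ^ m) (of_int b)"
proof -
  have "y ^ m = of_int 1 * y ^ m" by simp
  also have "cong_ideal D p \<dots> (of_int (a ^ m * b) * y ^ m)"
    using cong_sym[OF assms(3)] by (rule cong_ideal_of_int_mult) (simp add: assms(2))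
  also have "\<dots> = of_int b * (of_int a * y) ^ m"
    by (simp add: power_mult_distrib)
  also have "cong_ideal D p \<dots> (of_int b * 1 ^ m)"
    using assms(1,2) by (intro cong_ideal_mult[OF cong_ideal_refl] cong_ideal_power) simp_all
  finally show ?thesis by simp
qed

theorem lemma2p3:
  fixes p :: int and D :: int
  assumes "prime p" and "odd p"
    and "D mod 4 = 3"
    and "\<not> QuadRes p D"
  shows "cong_ideal D p
     ((\<Prod>(s, t) \<in> {(s, t). 1 \<le> s \<and> s < t \<and> t \<le> p - 1}.
         inv_mod D p (of_int t + csqrt (of_int D)) * inv_mod D p (of_int s + csqrt (of_int D)))
       ^ nat ((p - 1) div 2))
     (of_int (Legendre (-2) p))"
proof -
  obtain n where p: "p = int n"
    using assms(1) by (metis prime_ge_0_int nonneg_int_cases)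
  have n: "prime n" "n > 2"
    using assms(1,2) prime_ge_2_int[OF assms(1)] unfolding p by (auto simp: le_less)
  define Y where "Y = (\<Prod>k\<in>{1..p - 1}. inv_mod D p (of_int k + csqrt (of_int D)))"
  have Y_in: "Y \<in> zsqrt D"
    unfolding Y_def by (intro prod_in_zsqrt inv_mod_int_plus_csqrt(1) assms(1,4))
  have "cong_ideal D p (of_int (-2) * Y) 1"
    using prod_inv_mod_int_plus_csqrt_cong[OF n, of D] assms(4) unfolding Y_def p by simp
  moreover have "[(-2) ^ ((n - 2) * ((n - 1) div 2)) * Legendre (-2) p = 1] (mod p)"
    using Legendre_power_cong[OF n, of "-2"] zdvd_imp_le[of "int n" 2] n(2)
    unfolding p by (auto simp: cong_0_iff)
  ultimately have "cong_ideal D p (Y ^ ((n - 2) * ((n - 1) div 2))) (of_int (Legendre (-2) p))"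
    by (rule cong_ideal_power_inverse[OF _ Y_in])
  moreover have "{(s, t). 1 \<le> s \<and> s < t \<and> t \<le> p - 1}
      = {(s, t). s \<in> {1..p - 1} \<and> t \<in> {1..p - 1} \<and> s < t}"
    by auto
  then have "(\<Prod>(s, t)\<in>{(s, t). 1 \<le> s \<and> s < t \<and> t \<le> p - 1}.
        inv_mod D p (of_int t + csqrt (of_int D)) * inv_mod D p (of_int s + csqrt (of_int D)))
      = Y ^ (n - 2)"
    using prod_pairs_less[of "{1..p - 1}" "\<lambda>k. inv_mod D p (of_int k + csqrt (of_int D))"] n(2)
    unfolding Y_def p by (simp add: nat_diff_distrib numeral_2_eq_2)
  moreover have "nat ((p - 1) div 2) = (n - 1) div 2"
    unfolding p using n(2) by (simp add: nat_div_distrib)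
  ultimately show ?thesis
    by (simp add: power_mult)
qed

end
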